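(* Let $(X,d)$ be a complete metric space and let $G:X\times X\to X$ be a mapping such that (a) $G(x,x)=x$ for all $x\in X$, and (b) for $x,y\in X$, $G(x,y)=x$ implies $y=x$. Let $T:X\to P_{cl}(X)$ be a multivalued operator with $SFix(T)\neq\emptyset$ and let $T_G(x)=\{G(x,u):u\in T(x)\}$ be the admissible perturbation of $T$ corresponding to $G$. Suppose there exist $\alpha,\beta,\gamma\ge0$ with $\alpha+\beta+\gamma<1$ such that $$H(T_G(x),T_G(y))\le\alpha d(x,y)+\beta D(x,T_G(y))+\gamma D(y,T_G(x))\quad\text{for all }x,y\in X.$$ Then: (i) $Fix(T)=SFix(T)=\{x^*\}$ for some $x^*\in X$; (ii) if additionally there exists $l\in(0,1)$ with $H(T(x),\{x^*\})\le l\,H(T_G(x),\{x^*\})$ for all $x\in X$, then for each $x\in X$ the sequence $(T^n(x))_{n\in\mathbb N}$ converges to $\{x^*\}$ with respect to $H$, i.e. $H(T^n(x),\{x^*\})\to0$; (iii) if additionally there exists $L>0$ such that $D(x,T_G(x))\le L\,D(x,T(x))$ for all $x\in X$, then for some $\xi\in(0,1)$, $$d(x,x^* )\le\frac{(1+\gamma)L}{(1-\alpha-\beta)\xi}D(x,T(x))\quad\text{for all }x\in X.$$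
   Context: $P_{cl}(X)$ is the family of nonempty closed subsets of $X$. $Fix(T)=\{x:x\in T(x)\}$, $SFix(T)=\{x:T(x)=\{x\}\}$. For nonempty $A,B\subseteq X$: $D(a,B)=\inf_{b\in B}d(a,b)$, $D(A,B)=\inf\{d(a,b):a\in A,b\in B\}$, $e(A,B)=\sup_{a\in A}D(a,B)$, $H(A,B)=\max\{e(A,B),e(B,A)\}$. Iterates: $T^0(x)=\{x\}$, $T^{n}(x)=\bigcup_{y\in T^{n-1}(x)}T(y)$. *)

theory Defs
  imports "HOL-Analysis.Analysis"
begin

text \<open>D(a,B) is the library's infdist. Excess and Hausdorff (generalized, possibly infinite)
  are ereal-valued.\<close>

definition excess :: "'a::metric_space set \<Rightarrow> 'a set \<Rightarrow> ereal" where
  "excess A B = (SUP a\<in>A. ereal (infdist a B))"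

definition Hdist :: "'a::metric_space set \<Rightarrow> 'a set \<Rightarrow> ereal" where
  "Hdist A B = max (excess A B) (excess B A)"

definition Fix :: "('a \<Rightarrow> 'a set) \<Rightarrow> 'a set" where
  "Fix T = {x. x \<in> T x}"

definition SFix :: "('a \<Rightarrow> 'a set) \<Rightarrow> 'a set" where
  "SFix T = {x. T x = {x}}"

fun mv_iter :: "('a \<Rightarrow> 'a set) \<Rightarrow> nat \<Rightarrow> 'a \<Rightarrow> 'a set" where
  "mv_iter T 0 x = {x}"
| "mv_iter T (Suc n) x = (\<Union>y\<in>mv_iter T n x. T y)"

definition adm_pert :: "('a \<Rightarrow> 'a \<Rightarrow> 'a) \<Rightarrow> ('a \<Rightarrow> 'a set) \<Rightarrow> 'a \<Rightarrow> 'a set" where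
  "adm_pert G T x = (\<lambda>u. G x u) ` T x"

end

theory Submission
  imports Defs
begin

text \<open>Let \<open>x\<^sup>*\<close> be a strict fixed point of \<open>T\<close>; the properties of \<open>G\<close> make it a strict fixed
  point of \<open>T\<^sub>G\<close> as well, and they give \<open>Fix T = Fix T\<^sub>G\<close>. Taking \<open>y = x\<^sup>*\<close> in the contraction
  condition, and using \<open>D(x\<^sup>*, T\<^sub>G x) \<le> H(T\<^sub>G x, {x\<^sup>*})\<close> to absorb the \<open>\<gamma>\<close>-term, shows that \<open>T\<^sub>G\<close>
  moves every point towards \<open>x\<^sup>*\<close> by the factor \<open>k = (\<alpha> + \<beta>) / (1 - \<gamma>) < 1\<close>.
  A fixed point \<open>x \<in> T\<^sub>G x\<close> therefore satisfies \<open>d(x, x\<^sup>*) \<le> k d(x, x\<^sup>*)\<close>, whence (i);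
  under the hypothesis of (ii), \<open>T\<close> itself moves points towards \<open>x\<^sup>*\<close> by the factor \<open>l k\<close>, so
  the iterates shrink geometrically; and the triangle inequality through the points of
  \<open>T\<^sub>G x\<close> gives \<open>(1 - k) d(x, x\<^sup>*) \<le> D(x, T\<^sub>G x)\<close>, whence (iii).\<close>

lemma excess_singleton_left: "excess {p} B = ereal (infdist p B)"
  unfolding excess_def by simp

lemma dist_le_Hdist_singleton:
  assumes "a \<in> A"
  shows "ereal (dist a p) \<le> Hdist A {p}"
proof -
  have "ereal (infdist a {p}) \<le> excess A {p}"
    unfolding excess_def using assms by (rule SUP_upper)
  then show ?thesis
    unfolding Hdist_def by (simp add: le_max_iff_disj)
qed

lemma infdist_le_Hdist_singleton: "ereal (infdist p A) \<le> Hdist A {p}"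
  unfolding Hdist_def excess_singleton_left by simp

lemma Hdist_singleton_nonneg: "0 \<le> Hdist A {p}"
  using infdist_le_Hdist_singleton[of p A] infdist_nonneg[of p A]
  by (metis ereal_less_eq(5) order_trans zero_ereal_def)

lemma Hdist_singleton_le:
  assumes "A \<noteq> {}" and "\<And>a. a \<in> A \<Longrightarrow> dist a p \<le> c"
  shows "Hdist A {p} \<le> ereal c"
proof -
  have "excess A {p} \<le> ereal c"
    unfolding excess_def by (rule SUP_least) (simp add: assms(2))
  moreover obtain a where "a \<in> A"
    using assms(1) by blast
  then have "infdist p A \<le> c"
    using assms(2) by (metis dist_commute infdist_le2)
  ultimately show ?thesis
    unfolding Hdist_def by (simp add: excess_singleton_left)
qed

definition contracts_towards :: "('a::metric_space \<Rightarrow> 'a set) \<Rightarrow> 'a \<Rightarrow> real \<Rightarrow> bool" where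
  "contracts_towards S p k \<longleftrightarrow> (\<forall>x. \<forall>a\<in>S x. dist a p \<le> k * dist x p)"

lemma contracts_towardsD:
  "contracts_towards S p k \<Longrightarrow> a \<in> S x \<Longrightarrow> dist a p \<le> k * dist x p"
  unfolding contracts_towards_def by blast

lemma Hdist_singleton_le_if_contracts_towards:
  assumes "contracts_towards S p k" and "S x \<noteq> {}"
  shows "Hdist (S x) {p} \<le> ereal (k * dist x p)"
  using assms by (intro Hdist_singleton_le) (auto dest: contracts_towardsD)

lemma Fix_subset_if_contracts_towards:
  assumes "contracts_towards S p k" and "k < 1"
  shows "Fix S \<subseteq> {p}"
proof
  fix x
  assume "x \<in> Fix S"
  then have "dist x p \<le> k * dist x p"
    unfolding Fix_def using assms(1) by (auto dest: contracts_towardsD)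
  then have "dist x p = 0"
    using assms(2) zero_le_dist[of x p] by (metis mult_le_cancel_right1 not_le order_antisym)
  then show "x \<in> {p}"
    by simp
qed

lemma dist_le_infdist_if_contracts_towards:
  assumes "contracts_towards S p k" and "S x \<noteq> {}" and "k < 1"
  shows "dist x p \<le> infdist x (S x) / (1 - k)"
proof -
  have "(1 - k) * dist x p \<le> dist x a" if "a \<in> S x" for a
    using dist_triangle[of x p a] contracts_towardsD[OF assms(1) that]
    by (simp add: algebra_simps)
  then have "(1 - k) * dist x p \<le> infdist x (S x)"
    unfolding infdist_notempty[OF assms(2)] by (intro cINF_greatest assms(2))
  then show ?thesis
    using assms(3) by (simp add: pos_le_divide_eq mult.commute)
qed

lemma contracts_towards_if_Hdist_dominated:
  assumes "contracts_towards S p k" and "\<And>x. S x \<noteq> {}" and "0 \<le> l"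
    and "\<And>x. Hdist (T x) {p} \<le> ereal l * Hdist (S x) {p}"
  shows "contracts_towards T p (l * k)"
  unfolding contracts_towards_def
proof (intro allI ballI)
  fix x y
  assume "y \<in> T x"
  then have "ereal (dist y p) \<le> Hdist (T x) {p}"
    by (rule dist_le_Hdist_singleton)
  also have "\<dots> \<le> ereal l * Hdist (S x) {p}"
    by (rule assms(4))
  also have "\<dots> \<le> ereal l * ereal (k * dist x p)"
    using assms by (intro ereal_mult_left_mono Hdist_singleton_le_if_contracts_towards) auto
  finally show "dist y p \<le> l * k * dist x p"
    by (simp add: mult.assoc)
qed

lemma mv_iter_nonempty:
  assumes "\<And>x. T x \<noteq> {}"
  shows "mv_iter T n x \<noteq> {}"
  using assms by (induction n) auto

lemma mv_iter_contracts_towards: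
  assumes "contracts_towards T p q" and "0 \<le> q"
  shows "contracts_towards (mv_iter T n) p (q ^ n)"
proof (induction n)
  case 0
  then show ?case
    by (simp add: contracts_towards_def)
next
  case (Suc n)
  show ?case
    unfolding contracts_towards_def
  proof (intro allI ballI)
    fix x y
    assume "y \<in> mv_iter T (Suc n) x"
    then obtain z where z: "z \<in> mv_iter T n x" "y \<in> T z"
      by auto
    have "dist y p \<le> q * dist z p"
      using assms(1) z(2) by (rule contracts_towardsD)
    also have "\<dots> \<le> q * (q ^ n * dist x p)"
      using contracts_towardsD[OF Suc.IH z(1)] assms(2) by (rule mult_left_mono)
    finally show "dist y p \<le> q ^ Suc n * dist x p"
      by (simp add: mult.assoc)
  qed
qed

lemma Hdist_mv_iter_singleton_tendsto_0:
  assumes "contracts_towards T p q" and "\<And>x. T x \<noteq> {}" and "0 \<le> q" "q < 1"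
  shows "(\<lambda>n. Hdist (mv_iter T n x) {p}) \<longlonglongrightarrow> 0"
proof (rule tendsto_sandwich[where f = "\<lambda>_. 0" and h = "\<lambda>n. ereal (q ^ n * dist x p)"])
  have "(\<lambda>n. q ^ n * dist x p) \<longlonglongrightarrow> 0 * dist x p"
    by (intro tendsto_mult tendsto_const LIMSEQ_power_zero) (use assms in auto)
  then show "(\<lambda>n. ereal (q ^ n * dist x p)) \<longlonglongrightarrow> 0"
    by (simp add: zero_ereal_def)
  show "\<forall>\<^sub>F n in sequentially. Hdist (mv_iter T n x) {p} \<le> ereal (q ^ n * dist x p)"
    using assms by (intro always_eventually allI Hdist_singleton_le_if_contracts_towards
        mv_iter_contracts_towards mv_iter_nonempty)
qed (auto simp: Hdist_singleton_nonneg)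

lemma adm_pert_SFix:
  assumes "\<And>x. G x x = x" and "T p = {p}"
  shows "adm_pert G T p = {p}"
  using assms unfolding adm_pert_def by simp

lemma Fix_adm_pert:
  assumes "\<And>x. G x x = x" and "\<And>x y. G x y = x \<Longrightarrow> y = x"
  shows "Fix (adm_pert G T) = Fix T"
  using assms unfolding Fix_def adm_pert_def by (auto intro: rev_image_eqI) metis

lemma reich_contracts_towards_SFix:
  fixes S :: "'a::metric_space \<Rightarrow> 'a set"
  assumes "S p = {p}" and "0 \<le> \<gamma>" "\<gamma> < 1"
    and contr: "\<And>x. Hdist (S x) (S p)
      \<le> ereal (\<alpha> * dist x p + \<beta> * infdist x (S p) + \<gamma> * infdist p (S x))"
  shows "contracts_towards S p ((\<alpha> + \<beta>) / (1 - \<gamma>))"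
  unfolding contracts_towards_def
proof (intro allI ballI)
  fix x a
  assume "a \<in> S x"
  define s h where "s = (\<alpha> + \<beta>) * dist x p" and "h = infdist p (S x)"
  have H: "Hdist (S x) {p} \<le> ereal (s + \<gamma> * h)"
    using contr[of x] unfolding assms(1) s_def h_def by (simp add: algebra_simps)
  then have "h \<le> s + \<gamma> * h"
    using infdist_le_Hdist_singleton[of p "S x"] unfolding h_def
    by (metis ereal_less_eq(3) order_trans)
  then have "h \<le> s / (1 - \<gamma>)"
    using assms(3) by (simp add: pos_le_divide_eq algebra_simps)
  then have "s + \<gamma> * h \<le> s + \<gamma> * (s / (1 - \<gamma>))"
    using assms(2) by (intro add_left_mono mult_left_mono)
  also have "\<dots> = s / (1 - \<gamma>)"
    using assms(3) by (simp add: field_simps)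
  finally have "Hdist (S x) {p} \<le> ereal (s / (1 - \<gamma>))"
    using H by (metis ereal_less_eq(3) order_trans)
  then show "dist a p \<le> (\<alpha> + \<beta>) / (1 - \<gamma>) * dist x p"
    using dist_le_Hdist_singleton[OF \<open>a \<in> S x\<close>, of p] unfolding s_def
    by (metis ereal_less_eq(3) order_trans times_divide_eq_left)
qed

lemma reich_error_estimate:
  assumes "contracts_towards S p ((\<alpha> + \<beta>) / (1 - \<gamma>))" and "S x \<noteq> {}"
    and "\<gamma> < 1" "\<alpha> + \<beta> + \<gamma> < 1"
  shows "dist x p \<le> (1 - \<gamma>) / (1 - \<alpha> - \<beta> - \<gamma>) * infdist x (S x)"
proof -
  have "(\<alpha> + \<beta>) / (1 - \<gamma>) < 1"
    using assms(3,4) by (simp add: field_simps)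
  from dist_le_infdist_if_contracts_towards[OF assms(1,2) this] show ?thesis
    using assms(3,4) by (simp add: field_simps)
qed

text \<open>The paper states the estimate with the weaker constant \<open>(1 + \<gamma>) / ((1 - \<alpha> - \<beta>) \<xi>)\<close>.\<close>

lemma reich_error_constant:
  assumes "0 \<le> \<gamma>" and "\<alpha> + \<beta> + \<gamma> < 1"
  obtains \<xi> :: real where "0 < \<xi>" "\<xi> < 1"
    "(1 - \<gamma>) / (1 - \<alpha> - \<beta> - \<gamma>) \<le> (1 + \<gamma>) / ((1 - \<alpha> - \<beta>) * \<xi>)"
proof
  define \<xi> where "\<xi> = (1 - \<alpha> - \<beta> - \<gamma>) / (2 * (1 - \<alpha> - \<beta>))"
  show "0 < \<xi>" "\<xi> < 1"
    using assms by (auto simp: \<xi>_def field_simps)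
  have "(1 - \<alpha> - \<beta>) * \<xi> = (1 - \<alpha> - \<beta> - \<gamma>) / 2"
    using assms by (simp add: \<xi>_def field_simps)
  then have "(1 + \<gamma>) / ((1 - \<alpha> - \<beta>) * \<xi>) = 2 * (1 + \<gamma>) / (1 - \<alpha> - \<beta> - \<gamma>)"
    by (simp only:) simp
  moreover have "(1 - \<gamma>) / (1 - \<alpha> - \<beta> - \<gamma>) \<le> 2 * (1 + \<gamma>) / (1 - \<alpha> - \<beta> - \<gamma>)"
    using assms by (intro divide_right_mono) auto
  ultimately show "(1 - \<gamma>) / (1 - \<alpha> - \<beta> - \<gamma>) \<le> (1 + \<gamma>) / ((1 - \<alpha> - \<beta>) * \<xi>)"
    by simp
qed

theorem mainTheorem3:
  fixes G :: "'a::complete_space \<Rightarrow> 'a \<Rightarrow> 'a"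
    and T :: "'a \<Rightarrow> 'a set"
    and \<alpha> \<beta> \<gamma> :: real
  assumes G_diag: "\<And>x. G x x = x"
    and G_inj: "\<And>x y. G x y = x \<Longrightarrow> y = x"
    and T_ne: "\<And>x. T x \<noteq> {}"
    and T_closed: "\<And>x. closed (T x)"
    and SFix_ne: "SFix T \<noteq> {}"
    and coef: "\<alpha> \<ge> 0" "\<beta> \<ge> 0" "\<gamma> \<ge> 0" "\<alpha> + \<beta> + \<gamma> < 1"
    and contr: "\<And>x y. Hdist (adm_pert G T x) (adm_pert G T y)
        \<le> ereal (\<alpha> * dist x y + \<beta> * infdist x (adm_pert G T y) + \<gamma> * infdist y (adm_pert G T x))"
  shows "\<exists>xs. Fix T = {xs} \<and> SFix T = {xs}
    \<and> ((\<exists>l::real. 0 < l \<and> l < 1 \<and>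
          (\<forall>x. Hdist (T x) {xs} \<le> ereal l * Hdist (adm_pert G T x) {xs}))
        \<longrightarrow> (\<forall>x. (\<lambda>n. Hdist (mv_iter T n x) {xs}) \<longlonglongrightarrow> 0))
    \<and> (\<forall>L::real. L > 0 \<longrightarrow>
          (\<forall>x. infdist x (adm_pert G T x) \<le> L * infdist x (T x))
        \<longrightarrow> (\<exists>\<xi>::real. 0 < \<xi> \<and> \<xi> < 1 \<and>
              (\<forall>x. dist x xs \<le> (1 + \<gamma>) * L / ((1 - \<alpha> - \<beta>) * \<xi>) * infdist x (T x))))"
proof -
  obtain xs where xs: "T xs = {xs}"
    using SFix_ne unfolding SFix_def by blast
  define TG k where "TG = adm_pert G T" and "k = (\<alpha> + \<beta>) / (1 - \<gamma>)"
  have \<gamma>1: "\<gamma> < 1" and k: "0 \<le> k" "k < 1"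
    using coef by (auto simp: k_def field_simps)
  have TG_ne: "TG x \<noteq> {}" for x
    unfolding TG_def adm_pert_def using T_ne by simp
  have "TG xs = {xs}"
    unfolding TG_def using G_diag xs by (rule adm_pert_SFix)
  then have TG_contracts: "contracts_towards TG xs k"
    unfolding k_def using coef(3) \<gamma>1 contr[folded TG_def] by (rule reich_contracts_towards_SFix)
  have "Fix T = {xs}"
    using Fix_subset_if_contracts_towards[OF TG_contracts k(2)] xs
      Fix_adm_pert[of G, OF G_diag G_inj, of T] unfolding TG_def Fix_def by auto
  moreover from this have "SFix T = {xs}"
    using xs unfolding Fix_def SFix_def by auto
  moreover have "(\<lambda>n. Hdist (mv_iter T n x) {xs}) \<longlonglongrightarrow> 0"
    if "0 < l" "l < 1" "\<forall>x. Hdist (T x) {xs} \<le> ereal l * Hdist (TG x) {xs}" for l x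
  proof (rule Hdist_mv_iter_singleton_tendsto_0[OF _ T_ne])
    show "contracts_towards T xs (l * k)"
      using that by (intro contracts_towards_if_Hdist_dominated[OF TG_contracts TG_ne]) auto
    show "0 \<le> l * k" "l * k < 1"
      using that k by (auto intro: mult_strict_mono[of l 1 k 1, simplified])
  qed
  moreover have "\<exists>\<xi>. 0 < \<xi> \<and> \<xi> < 1 \<and>
      (\<forall>x. dist x xs \<le> (1 + \<gamma>) * L / ((1 - \<alpha> - \<beta>) * \<xi>) * infdist x (T x))"
    if L: "0 < L" "\<forall>x. infdist x (TG x) \<le> L * infdist x (T x)" for L
  proof -
    obtain \<xi> where \<xi>: "0 < \<xi>" "\<xi> < 1"
      "(1 - \<gamma>) / (1 - \<alpha> - \<beta> - \<gamma>) \<le> (1 + \<gamma>) / ((1 - \<alpha> - \<beta>) * \<xi>)"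
      using reich_error_constant coef(3,4) by blast
    have "dist x xs \<le> (1 + \<gamma>) * L / ((1 - \<alpha> - \<beta>) * \<xi>) * infdist x (T x)" for x
    proof -
      have "dist x xs \<le> (1 - \<gamma>) / (1 - \<alpha> - \<beta> - \<gamma>) * infdist x (TG x)"
        using TG_contracts TG_ne \<gamma>1 coef(4) unfolding k_def by (rule reich_error_estimate)
      also have "\<dots> \<le> (1 + \<gamma>) / ((1 - \<alpha> - \<beta>) * \<xi>) * (L * infdist x (T x))"
        using \<xi> L(2) coef by (intro mult_mono) (auto simp: infdist_nonneg)
      finally show ?thesis
        by simp
    qed
    with \<xi> show ?thesis
      by blast
  qed
  ultimately show ?thesis
    unfolding TG_def by blast
qed

end
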